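(* Let $N^2$ be either the round sphere $\mathbb{S}^2$ or the hyperbolic plane $\mathbb{H}^2$ (curvature $\pm1$), let $\pi:N^2\times\mathbb{R}\to N^2$ be the projection onto the first factor of the Riemannian product, and let $\gamma:I\subset\mathbb{R}\to N^2$ be a curve parametrised by arc length. Then the cylinder $S=\pi^{-1}(\gamma(I))$ is a biminimal surface with respect to $\lambda$ in $N^2\times\mathbb{R}$ if and only if $\gamma$ is a biminimal curve with respect to $\lambda$ on $N^2$.
   Context: For a map $\phi$: tension field $\tau(\phi)=\operatorname{trace}\nabla d\phi$, bitension field $\tau_2(\phi)=\sum_i(\nabla^\phi_{e_i}\nabla^\phi_{e_i}-\nabla^\phi_{\nabla_{e_i}e_i})\tau(\phi)+\sum_iR^N(d\phi(e_i),\tau(\phi))d\phi(e_i)$, with $R(X,Y)Z=\nabla_{[X,Y]}Z-\nabla_X\nabla_YZ+\nabla_Y\nabla_XZ$. An immersion is biminimal with respect to $\lambda\in\mathbb{R}$ if $[\tau_2(\phi)]^\perp-\lambda[\tau(\phi)]^\perp=0$ ($\perp$ = normal component). For an arc-length curve on a surface of Gaussian curvature $G$ with signed curvature $k$, this is equivalent to $k''-k^3+kG-\lambda k=0$. *)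

theory Defs
  imports "HOL-Analysis.Analysis"
begin

text \<open>The domain is a coordinate patch in a Euclidean space 'd (coordinate vectors = Basis);
 the target Riemannian manifold N is a nondegenerate hypersurface of a (pseudo-)Euclidean
 space 'v, described by the ambient bilinear form gm (its restriction to TN is the metric),
 the tangential projection Tn p v onto T_p N (so the Levi-Civita connection of N is Tn of the
 ambient derivative, Gauss formula), and its curvature tensor Rm p X Y Z.\<close>

definition pd :: "('d::real_normed_vector \<Rightarrow> 'v::real_normed_vector) \<Rightarrow> 'd \<Rightarrow> 'd \<Rightarrow> 'v" where
  "pd f b u = frechet_derivative f (at u) b"

definition ginv :: "('d::euclidean_space \<Rightarrow> 'd \<Rightarrow> real) \<Rightarrow> 'd \<Rightarrow> 'd \<Rightarrow> real" where
  "ginv G = (SOME H. \<forall>i\<in>Basis. \<forall>j\<in>Basis.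
      (\<Sum>k\<in>Basis. G i k * H k j) = (if i = j then 1 else 0))"

definition indmet :: "('v \<Rightarrow> 'v \<Rightarrow> real) \<Rightarrow> ('d::euclidean_space \<Rightarrow> 'v::real_normed_vector)
    \<Rightarrow> 'd \<Rightarrow> 'd \<Rightarrow> 'd \<Rightarrow> real" where
  "indmet gm \<phi> u i j = gm (pd \<phi> i u) (pd \<phi> j u)"

definition christoffel :: "('v \<Rightarrow> 'v \<Rightarrow> real) \<Rightarrow> ('d::euclidean_space \<Rightarrow> 'v::real_normed_vector)
    \<Rightarrow> 'd \<Rightarrow> 'd \<Rightarrow> 'd \<Rightarrow> 'd \<Rightarrow> real" where
  "christoffel gm \<phi> u i j k = (1/2) * (\<Sum>l\<in>Basis. ginv (indmet gm \<phi> u) k l *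
      (pd (\<lambda>w. indmet gm \<phi> w j l) i u + pd (\<lambda>w. indmet gm \<phi> w i l) j u
        - pd (\<lambda>w. indmet gm \<phi> w i j) l u))"

definition tension :: "('v \<Rightarrow> 'v \<Rightarrow> real) \<Rightarrow> ('v \<Rightarrow> 'v \<Rightarrow> 'v)
    \<Rightarrow> ('d::euclidean_space \<Rightarrow> 'v::real_normed_vector) \<Rightarrow> 'd \<Rightarrow> 'v" where
  "tension gm Tn \<phi> u = (\<Sum>i\<in>Basis. \<Sum>j\<in>Basis. ginv (indmet gm \<phi> u) i j *\<^sub>R
      (Tn (\<phi> u) (pd (pd \<phi> j) i u) - (\<Sum>k\<in>Basis. christoffel gm \<phi> u i j k *\<^sub>R pd \<phi> k u)))"

definition covd :: "('v \<Rightarrow> 'v \<Rightarrow> 'v) \<Rightarrow> ('d::real_normed_vector \<Rightarrow> 'v::real_normed_vector)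
    \<Rightarrow> ('d \<Rightarrow> 'v) \<Rightarrow> 'd \<Rightarrow> 'd \<Rightarrow> 'v" where
  "covd Tn \<phi> V i u = Tn (\<phi> u) (pd V i u)"

definition bitension :: "('v \<Rightarrow> 'v \<Rightarrow> real) \<Rightarrow> ('v \<Rightarrow> 'v \<Rightarrow> 'v) \<Rightarrow> ('v \<Rightarrow> 'v \<Rightarrow> 'v \<Rightarrow> 'v \<Rightarrow> 'v)
    \<Rightarrow> ('d::euclidean_space \<Rightarrow> 'v::real_normed_vector) \<Rightarrow> 'd \<Rightarrow> 'v" where
  "bitension gm Tn Rm \<phi> u = (let \<tau> = tension gm Tn \<phi> in
     (\<Sum>i\<in>Basis. \<Sum>j\<in>Basis. ginv (indmet gm \<phi> u) i j *\<^sub>R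
        (covd Tn \<phi> (covd Tn \<phi> \<tau> j) i u
         - (\<Sum>k\<in>Basis. christoffel gm \<phi> u i j k *\<^sub>R covd Tn \<phi> \<tau> k u)))
   + (\<Sum>i\<in>Basis. \<Sum>j\<in>Basis. ginv (indmet gm \<phi> u) i j *\<^sub>R
        Rm (\<phi> u) (pd \<phi> i u) (\<tau> u) (pd \<phi> j u)))"

definition nrm :: "('v \<Rightarrow> 'v \<Rightarrow> real) \<Rightarrow> ('d::euclidean_space \<Rightarrow> 'v::real_normed_vector)
    \<Rightarrow> 'd \<Rightarrow> 'v \<Rightarrow> 'v" where
  "nrm gm \<phi> u V = V - (\<Sum>i\<in>Basis. \<Sum>j\<in>Basis.
      (ginv (indmet gm \<phi> u) i j * gm V (pd \<phi> j u)) *\<^sub>R pd \<phi> i u)"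

definition biminimal :: "('v \<Rightarrow> 'v \<Rightarrow> real) \<Rightarrow> ('v \<Rightarrow> 'v \<Rightarrow> 'v) \<Rightarrow> ('v \<Rightarrow> 'v \<Rightarrow> 'v \<Rightarrow> 'v \<Rightarrow> 'v)
    \<Rightarrow> ('d::euclidean_space \<Rightarrow> 'v::real_normed_vector) \<Rightarrow> 'd set \<Rightarrow> real \<Rightarrow> bool" where
  "biminimal gm Tn Rm \<phi> U lam \<longleftrightarrow>
     (\<forall>u\<in>U. nrm gm \<phi> u (bitension gm Tn Rm \<phi> u) - lam *\<^sub>R nrm gm \<phi> u (tension gm Tn \<phi> u) = 0)"

section \<open>The space forms N^2(c), c = 1 (sphere) or c = -1 (hyperboloid model), and N^2(c) x R\<close>

definition lf :: "real \<Rightarrow> real^3 \<Rightarrow> real^3 \<Rightarrow> real" where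
  "lf c x y = x$1 * y$1 + x$2 * y$2 + c * (x$3 * y$3)"

definition Nsp :: "real \<Rightarrow> (real^3) set" where
  "Nsp c = {x. lf c x x = c \<and> (c = 1 \<or> x$3 > 0)}"

definition tanN :: "real \<Rightarrow> real^3 \<Rightarrow> real^3 \<Rightarrow> real^3" where
  "tanN c x v = v - (lf c v x / c) *\<^sub>R x"

text \<open>curvature with the convention R(X,Y)Z = nabla_[X,Y]Z - nabla_X nabla_Y Z + nabla_Y nabla_X Z\<close>
definition curvN :: "real \<Rightarrow> real^3 \<Rightarrow> real^3 \<Rightarrow> real^3 \<Rightarrow> real^3 \<Rightarrow> real^3" where
  "curvN c p X Y Z = (c * lf c X Z) *\<^sub>R Y - (c * lf c Y Z) *\<^sub>R X"

definition lfP :: "real \<Rightarrow> (real^3) \<times> real \<Rightarrow> (real^3) \<times> real \<Rightarrow> real" where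
  "lfP c X Y = lf c (fst X) (fst Y) + snd X * snd Y"

definition tanP :: "real \<Rightarrow> (real^3) \<times> real \<Rightarrow> (real^3) \<times> real \<Rightarrow> (real^3) \<times> real" where
  "tanP c p X = (tanN c (fst p) (fst X), snd X)"

definition curvP :: "real \<Rightarrow> (real^3) \<times> real \<Rightarrow> (real^3) \<times> real \<Rightarrow> (real^3) \<times> real
    \<Rightarrow> (real^3) \<times> real \<Rightarrow> (real^3) \<times> real" where
  "curvP c p X Y Z = (curvN c (fst p) (fst X) (fst Y) (fst Z), 0)"

definition cylinder :: "(real \<Rightarrow> real^3) \<Rightarrow> real \<times> real \<Rightarrow> (real^3) \<times> real" where
  "cylinder \<gamma> = (\<lambda>(s, t). (\<gamma> s, t))"

definition smooth_curve_on :: "real set \<Rightarrow> (real \<Rightarrow> real^3) \<Rightarrow> bool" where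
  "smooth_curve_on I \<gamma> \<longleftrightarrow>
     (\<forall>n. \<forall>s\<in>I. (((\<lambda>f s. vector_derivative f (at s)) ^^ n) \<gamma>) differentiable (at s))"

end

theory Submission
  imports Defs
begin

text \<open>Parametrise the cylinder by \<open>\<phi>(s,t) = (\<gamma>(s), t)\<close>. Since \<open>\<gamma>\<close> has unit speed, these are
orthonormal coordinates, so the Christoffel symbols vanish and tension, bitension and normal
projection become plain coordinate sums. Every field that occurs is lifted from the curve: it
depends on \<open>s\<close> only and has zero \<open>\<real>\<close>-component, so the \<open>t\<close>-direction contributes nothing
and \<open>\<tau>(\<phi>) = (\<tau>(\<gamma>), 0)\<close>, \<open>\<tau>\<^sub>2(\<phi>) = (\<tau>\<^sub>2(\<gamma>), 0)\<close>, \<open>(X, 0)\<^sup>\<perp> = (X\<^sup>\<perp>, 0)\<close>. Hence the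
biminimality equation of the cylinder at \<open>(s,t)\<close> is that of \<open>\<gamma>\<close> at \<open>s\<close>.\<close>

lemma pd_transform_within_open:
  assumes "open S" "x \<in> S" "\<And>y. y \<in> S \<Longrightarrow> f y = g y"
  shows "pd f v x = pd g v x"
proof -
  have "(f has_derivative D) (at x) \<longleftrightarrow> (g has_derivative D) (at x)" for D
    using has_derivative_transform_within_open[OF _ assms(1,2), where f = f and g = g]
      has_derivative_transform_within_open[OF _ assms(1,2), where f = g and g = f] assms(3)
    by auto
  then show ?thesis unfolding pd_def frechet_derivative_def by simp
qed

lemma pd_const_on_open:
  assumes "open S" "x \<in> S" "\<And>y. y \<in> S \<Longrightarrow> f y = k"
  shows "pd f v x = 0"
  using pd_transform_within_open[OF assms] by (simp add: pd_def)

lemma pd_eq_vector_derivative_within_open: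
  fixes f g :: "real \<Rightarrow> 'a::real_normed_vector"
  assumes "open S" "s \<in> S" "\<And>y. y \<in> S \<Longrightarrow> f y = g y" "(g has_vector_derivative g') (at s)"
  shows "f differentiable (at s)" "pd f 1 s = g'"
proof -
  have "(f has_vector_derivative g') (at s)"
    using has_vector_derivative_transform_within_open[OF assms(4,1,2)] assms(3) by simp
  then have "(f has_derivative (\<lambda>h. h *\<^sub>R g')) (at s)"
    by (simp add: has_vector_derivative_def)
  then show "f differentiable (at s)" "pd f 1 s = g'"
    by (auto simp: pd_def frechet_derivative_at[symmetric] differentiable_def)
qed

lemma pd_lifted_field:
  fixes F :: "real \<Rightarrow> 'a::real_normed_vector" and G :: "real \<times> real \<Rightarrow> 'a \<times> real"
  assumes "open I" "s \<in> I" "F differentiable (at s)"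
    and "\<And>w. w \<in> I \<times> UNIV \<Longrightarrow> G w = (F (fst w), a * snd w)"
  shows "pd G (1,0) (s,t) = (pd F 1 s, 0)" "pd G (0,1) (s,t) = (0, a)"
proof -
  have "(F has_derivative frechet_derivative F (at s)) (at (fst (s,t)))"
    using assms(3) by (simp add: frechet_derivative_works)
  then have "((\<lambda>w. (F (fst w), a * snd w)) has_derivative
      (\<lambda>h. (frechet_derivative F (at s) (fst h), a * snd h))) (at (s,t))"
    by (intro has_derivative_Pair has_derivative_compose[OF has_derivative_fst[OF has_derivative_ident]]
        has_derivative_mult_right has_derivative_snd[OF has_derivative_ident])
  then have "pd G v (s,t) = (frechet_derivative F (at s) (fst v), a * snd v)" for v
    using pd_transform_within_open[of "I \<times> UNIV" "(s,t)" G "\<lambda>w. (F (fst w), a * snd w)"] assms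
    by (auto simp: open_Times pd_def frechet_derivative_at[symmetric])
  moreover have "frechet_derivative F (at s) 0 = 0"
    using assms(3) frechet_derivative_works has_derivative_linear linear_0 by blast
  ultimately show "pd G (1,0) (s,t) = (pd F 1 s, 0)" "pd G (0,1) (s,t) = (0, a)"
    by (simp_all add: pd_def)
qed

definition orthonormal_coordinates_on ::
    "'d set \<Rightarrow> ('v \<Rightarrow> 'v \<Rightarrow> real) \<Rightarrow> ('d::euclidean_space \<Rightarrow> 'v::real_normed_vector) \<Rightarrow> bool" where
  "orthonormal_coordinates_on U gm \<phi> \<longleftrightarrow>
     (\<forall>u\<in>U. \<forall>i\<in>Basis. \<forall>j\<in>Basis. indmet gm \<phi> u i j = (if i = j then 1 else 0))"

lemma sum_Kronecker_scaleR:
  fixes F :: "'a \<Rightarrow> 'v::real_vector"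
  assumes "finite A" "i \<in> A"
  shows "(\<Sum>j\<in>A. (if i = j then 1 else 0) *\<^sub>R F j) = F i"
proof -
  have "(\<Sum>j\<in>A. (if i = j then 1 else 0) *\<^sub>R F j) = (\<Sum>j\<in>A. if i = j then F j else 0)"
    by (rule sum.cong) auto
  with assms show ?thesis by simp
qed

lemma ginv_identity:
  fixes G :: "'d::euclidean_space \<Rightarrow> 'd \<Rightarrow> real"
  assumes "\<And>i j. i \<in> Basis \<Longrightarrow> j \<in> Basis \<Longrightarrow> G i j = (if i = j then 1 else 0)"
    and "i \<in> Basis" "j \<in> Basis"
  shows "ginv G i j = (if i = j then 1 else 0)"
proof -
  have mult_G: "(\<Sum>k\<in>Basis. G i k * H k j) = H i j" if "i \<in> Basis" for H i j
  proof -
    have "(\<Sum>k\<in>Basis. G i k * H k j) = (\<Sum>k\<in>Basis. (if i = k then 1 else 0) *\<^sub>R H k j)"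
      using that assms(1) by (intro sum.cong) auto
    also have "\<dots> = H i j"
      using that by (rule sum_Kronecker_scaleR[OF finite_Basis])
    finally show ?thesis .
  qed
  have "\<forall>i\<in>Basis. \<forall>j\<in>Basis. (\<Sum>k\<in>Basis. G i k * ginv G k j) = (if i = j then 1 else 0)"
    unfolding ginv_def
    by (rule someI[of _ "\<lambda>i j. if i = j then 1 else 0"]) (intro ballI mult_G)
  with assms(2,3) mult_G[of i "ginv G" j] show ?thesis by simp
qed

lemma sum_Basis_diagonal:
  fixes F :: "'d::euclidean_space \<Rightarrow> 'd \<Rightarrow> 'v::real_vector"
  shows "(\<Sum>i\<in>Basis. \<Sum>j\<in>Basis. (if i = j then 1 else 0) *\<^sub>R F i j) = (\<Sum>i\<in>Basis. F i i)"
  by (simp add: sum_Kronecker_scaleR)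

context
  fixes U :: "'d::euclidean_space set" and gm :: "'v::real_normed_vector \<Rightarrow> 'v \<Rightarrow> real"
    and \<phi> :: "'d \<Rightarrow> 'v" and u :: 'd
  assumes orthonormal: "orthonormal_coordinates_on U gm \<phi>" and open_U: "open U" and in_U: "u \<in> U"
begin

lemma ginv_indmet_orthonormal:
  "i \<in> Basis \<Longrightarrow> j \<in> Basis \<Longrightarrow> ginv (indmet gm \<phi> u) i j = (if i = j then 1 else 0)"
  using orthonormal in_U by (intro ginv_identity) (auto simp: orthonormal_coordinates_on_def)

lemma christoffel_orthonormal:
  assumes "i \<in> Basis" "j \<in> Basis"
  shows "christoffel gm \<phi> u i j k = 0"
proof -
  have "pd (\<lambda>w. indmet gm \<phi> w a b) v u = 0" if "a \<in> Basis" "b \<in> Basis" for a b v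
    using orthonormal that by (intro pd_const_on_open[OF open_U in_U]) (auto simp: orthonormal_coordinates_on_def)
  with assms show ?thesis by (simp add: christoffel_def)
qed

lemma tension_orthonormal:
  "tension gm Tn \<phi> u = (\<Sum>i\<in>Basis. Tn (\<phi> u) (pd (pd \<phi> i) i u))"
  unfolding tension_def
  by (simp add: ginv_indmet_orthonormal christoffel_orthonormal sum_Basis_diagonal cong: sum.cong)

lemma bitension_orthonormal:
  "bitension gm Tn Rm \<phi> u =
     (\<Sum>i\<in>Basis. covd Tn \<phi> (covd Tn \<phi> (tension gm Tn \<phi>) i) i u)
   + (\<Sum>i\<in>Basis. Rm (\<phi> u) (pd \<phi> i u) (tension gm Tn \<phi> u) (pd \<phi> i u))"
  unfolding bitension_def Let_def
  by (simp add: ginv_indmet_orthonormal christoffel_orthonormal sum_Basis_diagonal cong: sum.cong)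

lemma nrm_orthonormal:
  "nrm gm \<phi> u V = V - (\<Sum>i\<in>Basis. gm V (pd \<phi> i u) *\<^sub>R pd \<phi> i u)"
  unfolding nrm_def
  by (simp add: ginv_indmet_orthonormal sum_Kronecker_scaleR flip: scaleR_scaleR cong: sum.cong)

end

lemma bounded_bilinear_lf: "bounded_bilinear (lf c)"
  unfolding bilinear_conv_bounded_bilinear[symmetric] bilinear_def lf_def
  by (auto intro!: linearI simp: algebra_simps)

lemma lf_differentiable:
  fixes f g :: "real \<Rightarrow> real^3"
  assumes "f differentiable (at s)" "g differentiable (at s)"
  shows "(\<lambda>s. lf c (f s) (g s)) differentiable (at s)"
proof -
  have "(f has_vector_derivative vector_derivative f (at s)) (at s)"
    and "(g has_vector_derivative vector_derivative g (at s)) (at s)"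
    using assms vector_derivative_works by blast+
  from bounded_bilinear.has_vector_derivative[OF bounded_bilinear_lf this]
  show ?thesis by (rule differentiableI_vector)
qed

lemma tanN_has_vector_derivative:
  assumes "(f has_vector_derivative f') (at s)" "(g has_vector_derivative g') (at s)"
  shows "((\<lambda>s. tanN c (f s) (g s)) has_vector_derivative
    (g' - ((lf c (g s) (f s) / c) *\<^sub>R f' + ((lf c (g s) f' + lf c g' (f s)) / c) *\<^sub>R f s))) (at s)"
proof -
  have "((\<lambda>s. lf c (g s) (f s)) has_real_derivative (lf c (g s) f' + lf c g' (f s))) (at s)"
    using bounded_bilinear.has_vector_derivative[OF bounded_bilinear_lf assms(2,1)]
    by (simp add: has_real_derivative_iff_has_vector_derivative)
  then show ?thesis
    unfolding tanN_def
    by (intro has_vector_derivative_diff assms(2) has_vector_derivative_scaleR assms(1) DERIV_cdivide)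
qed

lemma lf_zero [simp]: "lf c x 0 = 0" "lf c 0 x = 0"
  by (simp_all add: lf_def)

lemma tanN_zero [simp]: "tanN c x 0 = 0"
  by (simp add: tanN_def)

lemma curvN_zero [simp]: "curvN c p 0 Y 0 = 0"
  by (simp add: curvN_def)

lemma cylinder_apply [simp]: "cylinder \<gamma> (s,t) = (\<gamma> s, t)"
  by (simp add: cylinder_def)

locale unit_speed_curve =
  fixes c :: real and I :: "real set" and \<gamma> :: "real \<Rightarrow> real^3"
  assumes open_I: "open I"
    and smooth: "smooth_curve_on I \<gamma>"
    and unit_speed: "\<forall>s\<in>I. lf c (vector_derivative \<gamma> (at s)) (vector_derivative \<gamma> (at s)) = 1"
begin

definition curve_deriv :: "nat \<Rightarrow> real \<Rightarrow> real^3" where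
  "curve_deriv n = ((\<lambda>f s. vector_derivative f (at s)) ^^ n) \<gamma>"

abbreviation curve_tension :: "real \<Rightarrow> real^3" where
  "curve_tension \<equiv> tension (lf c) (tanN c) \<gamma>"

lemma curve_deriv_0: "curve_deriv 0 = \<gamma>"
  by (simp add: curve_deriv_def)

lemma curve_deriv_differentiable: "s \<in> I \<Longrightarrow> curve_deriv n differentiable (at s)"
  using smooth unfolding smooth_curve_on_def curve_deriv_def by blast

lemma curve_deriv_has_vector_derivative:
  "s \<in> I \<Longrightarrow> (curve_deriv n has_vector_derivative curve_deriv (Suc n) s) (at s)"
  unfolding curve_deriv_def funpow.simps o_apply
  using curve_deriv_differentiable[unfolded curve_deriv_def] vector_derivative_works by blast

lemma pd_curve: "s \<in> I \<Longrightarrow> pd \<gamma> 1 s = curve_deriv 1 s"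
  using pd_eq_vector_derivative_within_open(2)[OF open_I _ _ curve_deriv_has_vector_derivative, of s \<gamma> 0]
  by (simp add: curve_deriv_0)

lemma pd_pd_curve:
  assumes "s \<in> I"
  shows "pd \<gamma> 1 differentiable (at s)" "pd (pd \<gamma> 1) 1 s = curve_deriv 2 s"
  using pd_eq_vector_derivative_within_open[OF open_I assms pd_curve
      curve_deriv_has_vector_derivative[OF assms, of 1]]
  by (simp_all add: numeral_2_eq_2)

lemma unit_speed_pd: "s \<in> I \<Longrightarrow> lf c (pd \<gamma> 1 s) (pd \<gamma> 1 s) = 1"
  using unit_speed pd_curve by (simp add: curve_deriv_def)

lemma curve_orthonormal: "orthonormal_coordinates_on I (lf c) \<gamma>"
  by (simp add: orthonormal_coordinates_on_def indmet_def Basis_real_def unit_speed_pd)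

lemma curve_tension_eq: "s \<in> I \<Longrightarrow> curve_tension s = tanN c (\<gamma> s) (curve_deriv 2 s)"
  using tension_orthonormal[OF curve_orthonormal open_I] pd_pd_curve by (simp add: Basis_real_def)

lemma curve_tension_differentiable:
  assumes "s \<in> I"
  shows "curve_tension differentiable (at s)"
    and "covd (tanN c) \<gamma> curve_tension 1 differentiable (at s)"
proof -
  define tension' where "tension' s = curve_deriv 3 s
    - ((lf c (curve_deriv 2 s) (\<gamma> s) / c) *\<^sub>R curve_deriv 1 s
       + ((lf c (curve_deriv 2 s) (curve_deriv 1 s) + lf c (curve_deriv 3 s) (\<gamma> s)) / c) *\<^sub>R \<gamma> s)"
    for s
  have "((\<lambda>s. tanN c (\<gamma> s) (curve_deriv 2 s)) has_vector_derivative tension' s) (at s)" if "s \<in> I" for s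
    using tanN_has_vector_derivative[OF curve_deriv_has_vector_derivative[OF that, of 0]
        curve_deriv_has_vector_derivative[OF that, of 2]]
    unfolding tension'_def curve_deriv_0 by simp
  then have tension_derivative: "curve_tension differentiable (at s) \<and> pd curve_tension 1 s = tension' s"
    if "s \<in> I" for s
    using pd_eq_vector_derivative_within_open[where f = curve_tension, OF open_I that curve_tension_eq]
      that by blast
  then show "curve_tension differentiable (at s)" using assms by blast
  have "tension' differentiable (at s)"
    unfolding tension'_def divide_inverse
    using curve_deriv_differentiable[OF assms] curve_deriv_differentiable[OF assms, of 0]
    unfolding curve_deriv_0
    by (intro differentiable_diff differentiable_add differentiable_scaleR differentiable_mult
        differentiable_const lf_differentiable)
  then have "(tension' has_vector_derivative vector_derivative tension' (at s)) (at s)"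
    using vector_derivative_works by blast
  from tanN_has_vector_derivative[OF curve_deriv_has_vector_derivative[OF assms, of 0] this]
  obtain C' where "((\<lambda>s. tanN c (\<gamma> s) (tension' s)) has_vector_derivative C') (at s)"
    unfolding curve_deriv_0 by blast
  moreover have "covd (tanN c) \<gamma> curve_tension 1 s = tanN c (\<gamma> s) (tension' s)" if "s \<in> I" for s
    using tension_derivative[OF that] by (simp add: covd_def)
  ultimately show "covd (tanN c) \<gamma> curve_tension 1 differentiable (at s)"
    by (rule pd_eq_vector_derivative_within_open(1)[OF open_I assms, rotated])
qed

lemma pd_cylinder:
  assumes "s \<in> I"
  shows "pd (cylinder \<gamma>) (1,0) (s,t) = (pd \<gamma> 1 s, 0)" "pd (cylinder \<gamma>) (0,1) (s,t) = (0, 1)"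
  using pd_lifted_field[OF open_I assms curve_deriv_differentiable[OF assms, of 0, unfolded curve_deriv_0],
      of "cylinder \<gamma>" 1]
  by (auto simp: cylinder_def case_prod_beta)

lemma sum_Basis_real_prod: "(\<Sum>i\<in>(Basis :: (real \<times> real) set). f i) = f (1,0) + f (0,1)"
  by (simp add: Basis_prod_def add.commute)

lemma cylinder_orthonormal: "orthonormal_coordinates_on (I \<times> UNIV) (lfP c) (cylinder \<gamma>)"
  by (auto simp: orthonormal_coordinates_on_def indmet_def Basis_prod_def pd_cylinder lfP_def unit_speed_pd)

lemma tension_cylinder:
  assumes "s \<in> I"
  shows "tension (lfP c) (tanP c) (cylinder \<gamma>) (s,t) = (curve_tension s, 0)"
proof -
  have "pd (cylinder \<gamma>) (1,0) w = (pd \<gamma> 1 (fst w), 0 * snd w)" if "w \<in> I \<times> UNIV" for w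
    using pd_cylinder(1)[of "fst w" "snd w"] that by auto
  from pd_lifted_field(1)[OF open_I assms pd_pd_curve(1)[OF assms] this]
  have "pd (pd (cylinder \<gamma>) (1,0)) (1,0) (s,t) = (pd (pd \<gamma> 1) 1 s, 0)" .
  moreover have "pd (pd (cylinder \<gamma>) (0,1)) (0,1) (s,t) = 0"
    using pd_cylinder(2) assms
    by (intro pd_const_on_open[where S = "I \<times> UNIV"]) (auto simp: open_Times open_I)
  ultimately show ?thesis
    using tension_orthonormal[OF cylinder_orthonormal, of "(s,t)"] open_I assms
      tension_orthonormal[OF curve_orthonormal open_I assms]
    by (simp add: sum_Basis_real_prod open_Times tanP_def Basis_real_def zero_prod_def)
qed

lemma covd_cylinder_lifted:
  assumes "s \<in> I" "V differentiable (at s)" "\<And>w. w \<in> I \<times> UNIV \<Longrightarrow> W w = (V (fst w), 0)"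
  shows "covd (tanP c) (cylinder \<gamma>) W (1,0) (s,t) = (covd (tanN c) \<gamma> V 1 s, 0)"
    and "covd (tanP c) (cylinder \<gamma>) W (0,1) (s,t) = 0"
proof -
  have "W w = (V (fst w), 0 * snd w)" if "w \<in> I \<times> UNIV" for w
    using assms(3)[OF that] by simp
  from pd_lifted_field[OF open_I assms(1,2) this]
  show "covd (tanP c) (cylinder \<gamma>) W (1,0) (s,t) = (covd (tanN c) \<gamma> V 1 s, 0)"
    and "covd (tanP c) (cylinder \<gamma>) W (0,1) (s,t) = 0"
    by (simp_all add: covd_def tanP_def zero_prod_def)
qed

lemma bitension_cylinder:
  assumes "s \<in> I"
  shows "bitension (lfP c) (tanP c) (curvP c) (cylinder \<gamma>) (s,t)
    = (bitension (lf c) (tanN c) (curvN c) \<gamma> s, 0)"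
proof -
  let ?\<tau> = "tension (lfP c) (tanP c) (cylinder \<gamma>)"
  have tension_lifted: "?\<tau> w = (curve_tension (fst w), 0)" if "w \<in> I \<times> UNIV" for w
    using tension_cylinder[of "fst w" "snd w"] that by auto
  have covd_lifted:
    "covd (tanP c) (cylinder \<gamma>) ?\<tau> (1,0) w = (covd (tanN c) \<gamma> curve_tension 1 (fst w), 0)"
    "covd (tanP c) (cylinder \<gamma>) ?\<tau> (0,1) w = ((\<lambda>_. 0) (fst w), 0)"
    if "w \<in> I \<times> UNIV" for w
    using covd_cylinder_lifted[OF _ curve_tension_differentiable(1) tension_lifted, of "fst w" "snd w"] that
    by (auto simp: zero_prod_def)
  have "covd (tanP c) (cylinder \<gamma>) (covd (tanP c) (cylinder \<gamma>) ?\<tau> (1,0)) (1,0) (s,t)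
      = (covd (tanN c) \<gamma> (covd (tanN c) \<gamma> curve_tension 1) 1 s, 0)"
    by (rule covd_cylinder_lifted(1)[OF assms curve_tension_differentiable(2)[OF assms] covd_lifted(1)])
  moreover have "covd (tanP c) (cylinder \<gamma>) (covd (tanP c) (cylinder \<gamma>) ?\<tau> (0,1)) (0,1) (s,t) = 0"
    by (rule covd_cylinder_lifted(2)[OF assms differentiable_const covd_lifted(2)])
  ultimately show ?thesis
    using bitension_orthonormal[OF cylinder_orthonormal, of "(s,t)"]
      bitension_orthonormal[OF curve_orthonormal open_I assms] tension_cylinder[OF assms]
    by (simp add: sum_Basis_real_prod open_Times open_I assms pd_cylinder Basis_real_def curvP_def
        zero_prod_def)
qed

lemma nrm_cylinder:
  assumes "s \<in> I"
  shows "nrm (lfP c) (cylinder \<gamma>) (s,t) (X, 0) = (nrm (lf c) \<gamma> s X, 0)"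
  using nrm_orthonormal[OF cylinder_orthonormal, of "(s,t)"] nrm_orthonormal[OF curve_orthonormal open_I assms]
  by (simp add: sum_Basis_real_prod open_Times open_I assms pd_cylinder Basis_real_def lfP_def)

lemma biminimal_cylinder_iff:
  "biminimal (lfP c) (tanP c) (curvP c) (cylinder \<gamma>) (I \<times> UNIV) lam
     \<longleftrightarrow> biminimal (lf c) (tanN c) (curvN c) \<gamma> I lam"
proof -
  have "nrm (lfP c) (cylinder \<gamma>) (s,t) (bitension (lfP c) (tanP c) (curvP c) (cylinder \<gamma>) (s,t))
      - lam *\<^sub>R nrm (lfP c) (cylinder \<gamma>) (s,t) (tension (lfP c) (tanP c) (cylinder \<gamma>) (s,t))
    = (nrm (lf c) \<gamma> s (bitension (lf c) (tanN c) (curvN c) \<gamma> s) - lam *\<^sub>R nrm (lf c) \<gamma> s (curve_tension s), 0)"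
    if "s \<in> I" for s t
    using that by (simp add: bitension_cylinder tension_cylinder nrm_cylinder)
  then show ?thesis
    unfolding biminimal_def by (auto simp: zero_prod_def)
qed

end

theorem proposition5p1:
  fixes c lam :: real and I :: "real set" and \<gamma> :: "real \<Rightarrow> real^3"
  assumes "c = 1 \<or> c = -1"
    and "open I"
    and "smooth_curve_on I \<gamma>"
    and "\<forall>s\<in>I. \<gamma> s \<in> Nsp c"
    and "\<forall>s\<in>I. lf c (vector_derivative \<gamma> (at s)) (vector_derivative \<gamma> (at s)) = 1"
  shows "biminimal (lfP c) (tanP c) (curvP c) (cylinder \<gamma>) (I \<times> UNIV) lam
     \<longleftrightarrow> biminimal (lf c) (tanN c) (curvN c) \<gamma> I lam"
proof -
  \<comment> \<open>Neither the value of \<open>c\<close> nor \<open>\<gamma>(I) \<subseteq> N\<^sup>2(c)\<close> is needed: the computation only uses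
    the product structure of \<open>lfP\<close>, \<open>tanP\<close> and \<open>curvP\<close>.\<close>
  interpret unit_speed_curve c I \<gamma>
    using assms(2,3,5) by unfold_locales
  show ?thesis by (rule biminimal_cylinder_iff)
qed

end
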